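(* Let $X=(X_t)_{t\in\mathbb N}$ be a time-homogeneous Markov chain on a finite state space $\mathcal S$ with column-stochastic transition matrix $M$, $M_{zx}=\mathbb P(X_{t+1}=z\mid X_t=x)$. Let $\{\mathcal S_1,\dots,\mathcal S_k\}$ be a partition of $\mathcal S$ and $\pi:\mathcal S\to\{\mathcal S_1,\dots,\mathcal S_k\}$ the map with $\pi(x)=\mathcal S_i$ iff $x\in\mathcal S_i$. Suppose that for every $i$, $$M_{zx}=M_{zx'}\quad\text{for all }x,x'\in\mathcal S_i\text{ and all }z\in\mathcal S\setminus\mathcal S_i.$$ Then $X$ is lumpable with respect to the partition, i.e. $\pi\circ X=(\pi(X_t))_t$ is a Markov chain for every initial distribution of $X_0$. *)

theory Defs
  imports "HOL-Probability.Probability" "HOL-Library.Disjoint_Sets"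
begin

context prob_space
begin

definition markov_property :: "(nat \<Rightarrow> 'a \<Rightarrow> 'b) \<Rightarrow> bool" where
  "markov_property Y \<longleftrightarrow>
    (\<forall>n (bs :: nat \<Rightarrow> 'b) c.
       prob {\<omega> \<in> space M. \<forall>t\<le>n. Y t \<omega> = bs t} > 0 \<longrightarrow>
         prob {\<omega> \<in> space M. Y (Suc n) \<omega> = c \<and> (\<forall>t\<le>n. Y t \<omega> = bs t)}
           / prob {\<omega> \<in> space M. \<forall>t\<le>n. Y t \<omega> = bs t}
         = prob {\<omega> \<in> space M. Y (Suc n) \<omega> = c \<and> Y n \<omega> = bs n}
           / prob {\<omega> \<in> space M. Y n \<omega> = bs n})"

definition homogeneous_markov_chain :: "(nat \<Rightarrow> 'a \<Rightarrow> 'b) \<Rightarrow> ('b \<Rightarrow> 'b \<Rightarrow> real) \<Rightarrow> bool" where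
  "homogeneous_markov_chain X T \<longleftrightarrow>
    markov_property X \<and>
    (\<forall>n x z. prob {\<omega> \<in> space M. X n \<omega> = x} > 0 \<longrightarrow>
       prob {\<omega> \<in> space M. X (Suc n) \<omega> = z \<and> X n \<omega> = x}
         / prob {\<omega> \<in> space M. X n \<omega> = x} = T z x)"

end

definition column_stochastic :: "('a::finite \<Rightarrow> 'a \<Rightarrow> real) \<Rightarrow> bool" where
  "column_stochastic T \<longleftrightarrow> (\<forall>z x. 0 \<le> T z x) \<and> (\<forall>x. (\<Sum>z\<in>UNIV. T z x) = 1)"

definition block_of :: "'a set set \<Rightarrow> 'a \<Rightarrow> 'a set" where
  "block_of P x = (THE B. B \<in> P \<and> x \<in> B)"

end

(*
  Under the hypothesis, the probability of jumping from a state x into a block C depends only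
  on the block B of x: for C \<noteq> B it is a sum of entries that are constant on B, and for C = B
  it is one minus the total mass leaving B. Hence, for any set of histories X_0 ... X_n ending
  in B, the probability of taking such a history and then entering C is that constant times the
  probability of the histories. Applied to the histories with a prescribed block path and to
  those merely ending in B, this makes both conditional probabilities of the Markov property
  equal to the same number.
*)

theory Submission
  imports Defs
begin

definition history :: "(nat \<Rightarrow> 'w \<Rightarrow> 'a) \<Rightarrow> nat \<Rightarrow> 'w \<Rightarrow> nat \<Rightarrow> 'a" where
  "history X n \<omega> = (\<lambda>t\<in>{..n}. X t \<omega>)"

lemma history_in_paths: "history X n \<omega> \<in> ({..n} \<rightarrow>\<^sub>E UNIV)"
  by (simp add: history_def)

lemma history_eq_iff:
  assumes "g \<in> ({..n} \<rightarrow>\<^sub>E UNIV)"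
  shows "history X n \<omega> = g \<longleftrightarrow> (\<forall>t\<le>n. X t \<omega> = g t)"
  using assms by (auto simp: history_def PiE_def extensional_def)

lemma measurable_history:
  fixes X :: "nat \<Rightarrow> 'w \<Rightarrow> 'a::finite"
  assumes [measurable]: "\<And>t. X t \<in> M \<rightarrow>\<^sub>M count_space UNIV"
  shows "history X n \<in> M \<rightarrow>\<^sub>M count_space ({..n} \<rightarrow>\<^sub>E UNIV)"
proof (subst measurable_count_space_eq2)
  show "finite ({..n} \<rightarrow>\<^sub>E UNIV :: (nat \<Rightarrow> 'a) set)" by (rule finite_PiE) simp_all
  have "Measurable.pred M (\<lambda>\<omega>. \<forall>t\<in>{..n}. X t \<omega> = g t)" for g :: "nat \<Rightarrow> 'a"
    by measurable
  then show "history X n \<in> space M \<rightarrow> ({..n} \<rightarrow>\<^sub>E UNIV) \<and>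
      (\<forall>g\<in>{..n} \<rightarrow>\<^sub>E UNIV. history X n -` {g} \<inter> space M \<in> sets M)"
    by (auto simp: history_in_paths history_eq_iff vimage_def Int_def pred_def conj_commute)
qed

definition lumpable :: "('b::finite \<Rightarrow> 'b \<Rightarrow> real) \<Rightarrow> ('b \<Rightarrow> 'c) \<Rightarrow> bool" where
  "lumpable T f \<longleftrightarrow>
    (\<forall>x x' c. f x = f x' \<longrightarrow> (\<Sum>z | f z = c. T z x) = (\<Sum>z | f z = c. T z x'))"

lemma (in finite_measure) finite_measure_split_values:
  assumes "finite S" "\<And>y. y \<in> S \<Longrightarrow> {\<omega> \<in> A. Y \<omega> = y} \<in> sets M"
  shows "measure M {\<omega> \<in> A. Y \<omega> \<in> S} = (\<Sum>y\<in>S. measure M {\<omega> \<in> A. Y \<omega> = y})"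
proof -
  have "{\<omega> \<in> A. Y \<omega> \<in> S} = (\<Union>y\<in>S. {\<omega> \<in> A. Y \<omega> = y})" by auto
  also have "measure M \<dots> = (\<Sum>y\<in>S. measure M {\<omega> \<in> A. Y \<omega> = y})"
    using assms by (intro finite_measure_finite_Union) (auto simp: disjoint_family_on_def)
  finally show ?thesis .
qed

context prob_space
begin

lemma events_history_in:
  fixes X :: "nat \<Rightarrow> 'a \<Rightarrow> 'b::finite"
  assumes "\<And>t. X t \<in> M \<rightarrow>\<^sub>M count_space UNIV"
  shows "{\<omega> \<in> space M. history X n \<omega> \<in> H} \<in> events"
proof -
  have "{\<omega> \<in> space M. history X n \<omega> \<in> H} = history X n -` (H \<inter> ({..n} \<rightarrow>\<^sub>E UNIV)) \<inter> space M"
    by (auto simp: history_in_paths)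
  also have "\<dots> \<in> events"
    by (rule measurable_sets[OF measurable_history[where X=X, OF assms]]) simp
  finally show ?thesis .
qed

lemma events_next_history_in:
  fixes X :: "nat \<Rightarrow> 'a \<Rightarrow> 'b::finite"
  assumes meas: "\<And>t. X t \<in> M \<rightarrow>\<^sub>M count_space UNIV"
  shows "{\<omega> \<in> space M. X (Suc n) \<omega> \<in> C \<and> history X n \<omega> \<in> H} \<in> events"
proof -
  have "{\<omega> \<in> space M. X (Suc n) \<omega> \<in> C \<and> history X n \<omega> \<in> H}
      = (X (Suc n) -` C \<inter> space M) \<inter> {\<omega> \<in> space M. history X n \<omega> \<in> H}"
    by auto
  also have "\<dots> \<in> events"
    using measurable_sets[OF meas, of C] events_history_in[where X=X, OF meas] by auto
  finally show ?thesis .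
qed

lemma prob_next_eq_given_path:
  assumes meas: "\<And>t. X t \<in> M \<rightarrow>\<^sub>M count_space UNIV"
    and chain: "homogeneous_markov_chain X T"
  shows "prob {\<omega> \<in> space M. X (Suc n) \<omega> = z \<and> (\<forall>t\<le>n. X t \<omega> = g t)}
       = T z (g n) * prob {\<omega> \<in> space M. \<forall>t\<le>n. X t \<omega> = g t}"
proof -
  note meas[measurable]
  define past where "past = {\<omega> \<in> space M. \<forall>t\<le>n. X t \<omega> = g t}"
  define now where "now = {\<omega> \<in> space M. X n \<omega> = g n}"
  define step where "step = {\<omega> \<in> space M. X (Suc n) \<omega> = z \<and> (\<forall>t\<le>n. X t \<omega> = g t)}"
  have "past \<in> events" "now \<in> events"
    unfolding past_def now_def by measurable
  have step_le: "prob step \<le> prob past"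
    by (rule finite_measure_mono[OF _ \<open>past \<in> events\<close>]) (auto simp: step_def past_def)
  have past_le: "prob past \<le> prob now"
    by (rule finite_measure_mono[OF _ \<open>now \<in> events\<close>]) (auto simp: now_def past_def)
  show ?thesis
  proof (cases "prob past = 0")
    case True
    with step_le have "prob step = 0" by (simp add: measure_le_0_iff)
    with True show ?thesis unfolding step_def past_def by simp
  next
    case False
    then have past_pos: "prob past > 0" by (simp add: zero_less_measure_iff)
    with past_le have now_pos: "prob now > 0" by linarith
    have markov: "markov_property X"
      and transition: "\<And>m x y. prob {\<omega> \<in> space M. X m \<omega> = x} > 0 \<Longrightarrow>
        prob {\<omega> \<in> space M. X (Suc m) \<omega> = y \<and> X m \<omega> = x} / prob {\<omega> \<in> space M. X m \<omega> = x} = T y x"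
      using chain unfolding homogeneous_markov_chain_def by auto
    have "prob step / prob past
        = prob {\<omega> \<in> space M. X (Suc n) \<omega> = z \<and> X n \<omega> = g n} / prob now"
      using markov[unfolded markov_property_def, rule_format, OF past_pos[unfolded past_def]]
      unfolding step_def past_def now_def .
    also have "\<dots> = T z (g n)"
      using transition now_pos unfolding now_def .
    finally show ?thesis using past_pos unfolding step_def past_def by (simp add: field_simps)
  qed
qed

lemma prob_next_in_given_history:
  fixes X :: "nat \<Rightarrow> 'a \<Rightarrow> 'b::finite"
  assumes meas: "\<And>t. X t \<in> M \<rightarrow>\<^sub>M count_space UNIV"
    and chain: "homogeneous_markov_chain X T"
    and g: "g \<in> {..n} \<rightarrow>\<^sub>E UNIV"
  shows "prob {\<omega> \<in> space M. X (Suc n) \<omega> \<in> C \<and> history X n \<omega> = g}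
       = (\<Sum>z\<in>C. T z (g n)) * prob {\<omega> \<in> space M. history X n \<omega> = g}"
proof -
  define A where "A = {\<omega> \<in> space M. history X n \<omega> = g}"
  have A_eq: "A = {\<omega> \<in> space M. \<forall>t\<le>n. X t \<omega> = g t}"
    by (auto simp: A_def history_eq_iff[OF g])
  have events_A_next: "{\<omega> \<in> A. X (Suc n) \<omega> = z} \<in> events" for z
    using events_next_history_in[where X=X and n=n and C="{z}" and H="{g}", OF meas]
    unfolding A_def by (simp add: conj_ac)
  have "{\<omega> \<in> space M. X (Suc n) \<omega> \<in> C \<and> history X n \<omega> = g} = {\<omega> \<in> A. X (Suc n) \<omega> \<in> C}"
    by (auto simp: A_def)
  then have "prob {\<omega> \<in> space M. X (Suc n) \<omega> \<in> C \<and> history X n \<omega> = g}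
      = prob {\<omega> \<in> A. X (Suc n) \<omega> \<in> C}"
    by simp
  also have "\<dots> = (\<Sum>z\<in>C. prob {\<omega> \<in> A. X (Suc n) \<omega> = z})"
    using events_A_next by (intro finite_measure_split_values) simp_all
  also have "\<dots> = (\<Sum>z\<in>C. T z (g n) * prob A)"
  proof (rule sum.cong[OF refl])
    fix z
    have "{\<omega> \<in> A. X (Suc n) \<omega> = z} = {\<omega> \<in> space M. X (Suc n) \<omega> = z \<and> (\<forall>t\<le>n. X t \<omega> = g t)}"
      by (auto simp: A_eq)
    then show "prob {\<omega> \<in> A. X (Suc n) \<omega> = z} = T z (g n) * prob A"
      using prob_next_eq_given_path[OF meas chain] by (simp add: A_eq)
  qed
  finally show ?thesis
    by (simp add: A_def sum_distrib_right)
qed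

lemma prob_next_in_given_histories:
  fixes X :: "nat \<Rightarrow> 'a \<Rightarrow> 'b::finite"
  assumes meas: "\<And>t. X t \<in> M \<rightarrow>\<^sub>M count_space UNIV"
    and chain: "homogeneous_markov_chain X T"
    and ends_in_B: "\<And>g. g \<in> H \<Longrightarrow> g n \<in> B"
    and exit_prob: "\<And>x. x \<in> B \<Longrightarrow> (\<Sum>z\<in>C. T z x) = q"
  shows "prob {\<omega> \<in> space M. X (Suc n) \<omega> \<in> C \<and> history X n \<omega> \<in> H}
       = q * prob {\<omega> \<in> space M. history X n \<omega> \<in> H}"
proof -
  define G where "G = H \<inter> ({..n} \<rightarrow>\<^sub>E UNIV)"
  have G_paths: "G \<subseteq> {..n} \<rightarrow>\<^sub>E UNIV"
    unfolding G_def by (rule Int_lower2)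
  have "finite G"
    by (rule finite_subset[OF G_paths]) (rule finite_PiE; simp)
  have split: "prob {\<omega> \<in> space M. X (Suc n) \<omega> \<in> C' \<and> history X n \<omega> \<in> H}
      = (\<Sum>g\<in>G. prob {\<omega> \<in> space M. X (Suc n) \<omega> \<in> C' \<and> history X n \<omega> = g})" for C'
  proof -
    have "{\<omega> \<in> space M. X (Suc n) \<omega> \<in> C' \<and> history X n \<omega> \<in> H}
        = {\<omega> \<in> {\<omega> \<in> space M. X (Suc n) \<omega> \<in> C'}. history X n \<omega> \<in> G}"
      by (simp add: G_def history_in_paths)
    also have "prob \<dots> = (\<Sum>g\<in>G. prob {\<omega> \<in> {\<omega> \<in> space M. X (Suc n) \<omega> \<in> C'}. history X n \<omega> = g})"
      using events_next_history_in[where X=X and n=n and C=C' and H="{_}", OF meas] \<open>finite G\<close>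
      by (intro finite_measure_split_values) simp_all
    finally show ?thesis by simp
  qed
  have "prob {\<omega> \<in> space M. X (Suc n) \<omega> \<in> C \<and> history X n \<omega> \<in> H}
      = (\<Sum>g\<in>G. q * prob {\<omega> \<in> space M. X (Suc n) \<omega> \<in> UNIV \<and> history X n \<omega> = g})"
    unfolding split
  proof (rule sum.cong[OF refl])
    fix g assume "g \<in> G"
    then have "g n \<in> B" "g \<in> {..n} \<rightarrow>\<^sub>E UNIV"
      using ends_in_B G_paths by (auto simp: G_def)
    then show "prob {\<omega> \<in> space M. X (Suc n) \<omega> \<in> C \<and> history X n \<omega> = g}
        = q * prob {\<omega> \<in> space M. X (Suc n) \<omega> \<in> UNIV \<and> history X n \<omega> = g}"
      using prob_next_in_given_history[OF meas chain] exit_prob by simp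
  qed
  also have "\<dots> = q * prob {\<omega> \<in> space M. X (Suc n) \<omega> \<in> UNIV \<and> history X n \<omega> \<in> H}"
    unfolding split by (simp add: sum_distrib_left)
  finally show ?thesis by simp
qed

lemma markov_property_lumped:
  fixes X :: "nat \<Rightarrow> 'a \<Rightarrow> 'b::finite" and f :: "'b \<Rightarrow> 'c"
  assumes meas: "\<And>t. X t \<in> M \<rightarrow>\<^sub>M count_space UNIV"
    and chain: "homogeneous_markov_chain X T"
    and "lumpable T f"
  shows "markov_property (\<lambda>t \<omega>. f (X t \<omega>))"
  unfolding markov_property_def
proof (intro allI impI)
  fix n and bs :: "nat \<Rightarrow> 'c" and c
  define past where "past = {g. \<forall>t\<le>n. f (g t) = bs t}"
  define now where "now = {g. f (g n) = bs n}"
  have past_eq: "{\<omega> \<in> space M. \<forall>t\<le>n. f (X t \<omega>) = bs t} = {\<omega> \<in> space M. history X n \<omega> \<in> past}"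
    and now_eq: "{\<omega> \<in> space M. f (X n \<omega>) = bs n} = {\<omega> \<in> space M. history X n \<omega> \<in> now}"
    and next_past_eq: "{\<omega> \<in> space M. f (X (Suc n) \<omega>) = c \<and> (\<forall>t\<le>n. f (X t \<omega>) = bs t)}
      = {\<omega> \<in> space M. X (Suc n) \<omega> \<in> {z. f z = c} \<and> history X n \<omega> \<in> past}"
    and next_now_eq: "{\<omega> \<in> space M. f (X (Suc n) \<omega>) = c \<and> f (X n \<omega>) = bs n}
      = {\<omega> \<in> space M. X (Suc n) \<omega> \<in> {z. f z = c} \<and> history X n \<omega> \<in> now}"
    by (auto simp: past_def now_def history_def)
  assume pos: "0 < prob {\<omega> \<in> space M. \<forall>t\<le>n. f (X t \<omega>) = bs t}"
  then have "{\<omega> \<in> space M. \<forall>t\<le>n. f (X t \<omega>) = bs t} \<noteq> {}"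
    by (metis less_irrefl measure_empty)
  then obtain x0 where x0: "f x0 = bs n"
    by auto
  define q where "q = (\<Sum>z | f z = c. T z x0)"
  have lumped: "prob {\<omega> \<in> space M. X (Suc n) \<omega> \<in> {z. f z = c} \<and> history X n \<omega> \<in> H}
      = q * prob {\<omega> \<in> space M. history X n \<omega> \<in> H}" if "H \<subseteq> now" for H
  proof (rule prob_next_in_given_histories[OF meas chain])
    show "g n \<in> {x. f x = bs n}" if "g \<in> H" for g
      using \<open>H \<subseteq> now\<close> that by (auto simp: now_def)
    show "(\<Sum>z\<in>{z. f z = c}. T z x) = q" if "x \<in> {x. f x = bs n}" for x
      using \<open>lumpable T f\<close> that x0 unfolding lumpable_def q_def by simp
  qed
  have "prob {\<omega> \<in> space M. history X n \<omega> \<in> past} \<le> prob {\<omega> \<in> space M. history X n \<omega> \<in> now}"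
    using events_history_in[where X=X and n=n and H=now, OF meas]
    by (intro finite_measure_mono) (auto simp: past_def now_def)
  with pos have "0 < prob {\<omega> \<in> space M. f (X n \<omega>) = bs n}"
    unfolding past_eq now_eq by linarith
  with pos show "prob {\<omega> \<in> space M. f (X (Suc n) \<omega>) = c \<and> (\<forall>t\<le>n. f (X t \<omega>) = bs t)}
        / prob {\<omega> \<in> space M. \<forall>t\<le>n. f (X t \<omega>) = bs t}
      = prob {\<omega> \<in> space M. f (X (Suc n) \<omega>) = c \<and> f (X n \<omega>) = bs n}
        / prob {\<omega> \<in> space M. f (X n \<omega>) = bs n}"
    unfolding past_eq now_eq next_past_eq next_now_eq
    using lumped[of past] lumped[of now] by (simp add: past_def now_def subset_eq)
qed

end

lemma block_of_eq:
  assumes "partition_on UNIV P" "B \<in> P" "x \<in> B"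
  shows "block_of P x = B"
  unfolding block_of_def
proof (rule the_equality)
  show "B \<in> P \<and> x \<in> B" using assms by simp
  show "B' = B" if "B' \<in> P \<and> x \<in> B'" for B'
    using assms that unfolding partition_on_def disjoint_def by blast
qed

lemma block_of_in_partition:
  assumes "partition_on UNIV P"
  shows "block_of P x \<in> P" and "x \<in> block_of P x"
proof -
  obtain B where "B \<in> P" "x \<in> B" using assms unfolding partition_on_def by blast
  with block_of_eq[OF assms] show "block_of P x \<in> P" "x \<in> block_of P x" by simp_all
qed

lemma block_of_eq_iff:
  assumes "partition_on UNIV P" "B \<in> P"
  shows "block_of P x = B \<longleftrightarrow> x \<in> B"
  using assms block_of_eq block_of_in_partition(2) by metis

text \<open>For \<open>C = B\<close> column-stochasticity is needed: the mass kept inside \<open>B\<close> is \<open>1\<close> minus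
  the mass sent out of \<open>B\<close>.\<close>
lemma sum_transitions_eq_on_block:
  fixes T :: "'a::finite \<Rightarrow> 'a \<Rightarrow> real"
  assumes stochastic: "column_stochastic T"
    and exits_equal: "\<And>x x' z. x \<in> B \<Longrightarrow> x' \<in> B \<Longrightarrow> z \<notin> B \<Longrightarrow> T z x = T z x'"
    and C: "C = B \<or> C \<inter> B = {}"
    and x: "x \<in> B" and x': "x' \<in> B"
  shows "(\<Sum>z\<in>C. T z x) = (\<Sum>z\<in>C. T z x')"
proof -
  have exits: "(\<Sum>z\<in>-B. T z x) = (\<Sum>z\<in>-B. T z x')"
    using exits_equal[OF x x'] by (intro sum.cong) auto
  show ?thesis
  proof (cases "C = B")
    case True
    have "(\<Sum>z\<in>B. T z y) = 1 - (\<Sum>z\<in>-B. T z y)" for y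
      using stochastic sum.subset_diff[of B UNIV "\<lambda>z. T z y"]
      by (simp add: column_stochastic_def Compl_eq_Diff_UNIV)
    with True exits show ?thesis by simp
  next
    case False
    with C have "C \<subseteq> -B" by blast
    then show ?thesis
      using exits_equal[OF x x'] by (intro sum.cong) auto
  qed
qed

lemma lumpable_block_of:
  fixes T :: "'a::finite \<Rightarrow> 'a \<Rightarrow> real"
  assumes stochastic: "column_stochastic T" and partition: "partition_on UNIV P"
    and exits_equal: "\<And>B x x' z. B \<in> P \<Longrightarrow> x \<in> B \<Longrightarrow> x' \<in> B \<Longrightarrow> z \<notin> B \<Longrightarrow> T z x = T z x'"
  shows "lumpable T (block_of P)"
  unfolding lumpable_def
proof (intro allI impI)
  fix x x' c
  assume same_block: "block_of P x = block_of P x'"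
  define B where "B = block_of P x"
  have B: "B \<in> P" "x \<in> B" "x' \<in> B"
    using block_of_in_partition[OF partition] same_block unfolding B_def by metis+
  have "{z. block_of P z = c} = B \<or> {z. block_of P z = c} \<inter> B = {}"
  proof (cases "c = B")
    case True
    then show ?thesis by (simp add: block_of_eq_iff[OF partition B(1)])
  next
    case False
    then show ?thesis using block_of_eq[OF partition B(1)] by auto
  qed
  then show "(\<Sum>z | block_of P z = c. T z x) = (\<Sum>z | block_of P z = c. T z x')"
    using sum_transitions_eq_on_block[OF stochastic exits_equal[OF B(1)] _ B(2,3)] by simp
qed

theorem mainTheorem12:
  fixes \<Omega> :: "'w measure" and X :: "nat \<Rightarrow> 'w \<Rightarrow> 'a::finite"
    and T :: "'a \<Rightarrow> 'a \<Rightarrow> real" and P :: "'a set set"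
  assumes "prob_space \<Omega>"
    and "\<And>t. X t \<in> measurable \<Omega> (count_space UNIV)"
    and "column_stochastic T"
    and "prob_space.homogeneous_markov_chain \<Omega> X T"
    and "partition_on UNIV P"
    and "\<And>B x x' z. B \<in> P \<Longrightarrow> x \<in> B \<Longrightarrow> x' \<in> B \<Longrightarrow> z \<notin> B \<Longrightarrow> T z x = T z x'"
  shows "prob_space.markov_property \<Omega> (\<lambda>t \<omega>. block_of P (X t \<omega>))"
proof -
  interpret prob_space \<Omega> by fact
  show ?thesis
    using markov_property_lumped[OF assms(2,4) lumpable_block_of[OF assms(3,5,6)]] .
qed

end
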